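(* Let $f:[0,\infty]^k\to[0,\infty]$ be subadditive (i.e. $f(\mathbf x+\mathbf y)\le f(\mathbf x)+f(\mathbf y)$ for all $\mathbf x,\mathbf y\in[0,\infty]^k$) and non-decreasing (i.e. $\mathbf x\le\mathbf y$ coordinatewise implies $f(\mathbf x)\le f(\mathbf y)$). If $\pi_1,\ldots,\pi_k$ are arbitrage-free price functions, then $\pi(\mathbf Q)=f(\pi_1(\mathbf Q),\ldots,\pi_k(\mathbf Q))$ is an arbitrage-free price function.
   Context: A query is a pair $(\mathbf q,v)$ with $\mathbf q\in\mathbb R^n$ and $v\in[0,\infty]$. A price function is a map $\pi:\mathbb R^n\times[0,\infty]\to[0,\infty]$. The determinacy relation $\mathbf S\rightarrow\mathbf Q$ between finite multisets of queries and queries is the smallest relation satisfying: (Summation) for every $k\ge 0$, $\{(\mathbf q_1,v_1),\ldots,(\mathbf q_k,v_k)\}\rightarrow(\mathbf q_1+\cdots+\mathbf q_k,\,v_1+\cdots+v_k)$; (Scalar multiplication) for every $c\in\mathbb R$, $\{(\mathbf q,v)\}\rightarrow(c\mathbf q,c^2v)$; (Relaxation) $\{(\mathbf q,v)\}\rightarrow(\mathbf q,v')$ whenever $v\le v'$; (Transitivity) if $\mathbf S_1\rightarrow\mathbf Q_1,\ldots,\mathbf S_k\rightarrow\mathbf Q_k$ and $\{\mathbf Q_1,\ldots,\mathbf Q_k\}\rightarrow\mathbf Q$, then $\mathbf S_1\uplus\cdots\uplus\mathbf S_k\rightarrow\mathbf Q$. A price function $\pi$ is arbitrage-free if for every $m\ge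 1$ and queries $\mathbf Q_1,\ldots,\mathbf Q_m,\mathbf Q$ with $\{\mathbf Q_1,\ldots,\mathbf Q_m\}\rightarrow\mathbf Q$ we have $\pi(\mathbf Q)\le\sum_{i=1}^m\pi(\mathbf Q_i)$. *)

theory Defs
  imports "HOL-Analysis.Analysis" "HOL-Library.Multiset" "HOL-Library.Extended_Nonnegative_Real"
begin

type_synonym ('n) query = "(real ^ 'n) \<times> ennreal"

inductive determines :: "('n::finite) query multiset \<Rightarrow> 'n query \<Rightarrow> bool" where
  summation: "determines (mset Qs) (sum_list (map fst Qs), sum_list (map snd Qs))"
| scalar: "determines {#(q, v)#} (c *\<^sub>R q, ennreal (c\<^sup>2) * v)"
| relax: "v \<le> v' \<Longrightarrow> determines {#(q, v)#} (q, v')"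
| trans: "\<forall>p \<in> set ps. determines (fst p) (snd p) \<Longrightarrow>
          determines (mset (map snd ps)) Q \<Longrightarrow>
          determines (sum_list (map fst ps)) Q"

definition arbitrage_free :: "(('n::finite) query \<Rightarrow> ennreal) \<Rightarrow> bool" where
  "arbitrage_free \<pi> \<longleftrightarrow>
     (\<forall>Qs Q. Qs \<noteq> [] \<longrightarrow> determines (mset Qs) Q \<longrightarrow> \<pi> Q \<le> sum_list (map \<pi> Qs))"

end

theory Submission
  imports Defs
begin

(* Componentwise, each price pi_i(Q) is bounded by the sum of the prices of the
   determining queries; monotonicity of f transfers these bounds to f, and
   subadditivity splits f of a componentwise sum into the sum of the values of f. *)

lemma subadditive_sum_list_le:
  fixes f :: "('k \<Rightarrow> 'a::comm_monoid_add) \<Rightarrow> 'b::ordered_comm_monoid_add"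
  assumes subadd: "\<And>x y. f (\<lambda>i. x i + y i) \<le> f x + f y"
    and "xs \<noteq> []"
  shows "f (\<lambda>i. sum_list (map (g i) xs)) \<le> sum_list (map (\<lambda>x. f (\<lambda>i. g i x)) xs)"
  using \<open>xs \<noteq> []\<close>
proof (induction xs rule: list_nonempty_induct)
  case (single x)
  then show ?case by simp
next
  case (cons x xs)
  have "f (\<lambda>i. sum_list (map (g i) (x # xs))) \<le> f (\<lambda>i. g i x) + f (\<lambda>i. sum_list (map (g i) xs))"
    using subadd by simp
  also have "\<dots> \<le> f (\<lambda>i. g i x) + sum_list (map (\<lambda>x. f (\<lambda>i. g i x)) xs)"
    using cons.IH by (rule add_left_mono)
  finally show ?case by simp
qed

theorem proposition5:
  fixes f :: "('k::finite \<Rightarrow> ennreal) \<Rightarrow> ennreal"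
    and \<pi>s :: "'k \<Rightarrow> (('n::finite) query \<Rightarrow> ennreal)"
  assumes subadd: "\<And>x y. f (\<lambda>i. x i + y i) \<le> f x + f y"
    and mono: "\<And>x y. (\<forall>i. x i \<le> y i) \<Longrightarrow> f x \<le> f y"
    and af: "\<And>i. arbitrage_free (\<pi>s i)"
  shows "arbitrage_free (\<lambda>Q. f (\<lambda>i. \<pi>s i Q))"
  unfolding arbitrage_free_def
proof (intro allI impI)
  fix Qs :: "'n query list" and Q :: "'n query"
  assume ne: "Qs \<noteq> []" and det: "determines (mset Qs) Q"
  have "\<forall>i. \<pi>s i Q \<le> sum_list (map (\<pi>s i) Qs)"
    using af ne det unfolding arbitrage_free_def by blast
  then have "f (\<lambda>i. \<pi>s i Q) \<le> f (\<lambda>i. sum_list (map (\<pi>s i) Qs))"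
    by (rule mono)
  also have "\<dots> \<le> sum_list (map (\<lambda>Q. f (\<lambda>i. \<pi>s i Q)) Qs)"
    using subadd ne by (rule subadditive_sum_list_le)
  finally show "f (\<lambda>i. \<pi>s i Q) \<le> sum_list (map (\<lambda>Q. f (\<lambda>i. \<pi>s i Q)) Qs)" .
qed

end
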